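(* Let $p$ be an odd prime and let $r\in\{2,3,\dots,p-1\}$ be a primitive root modulo $p$. (1) If $p\equiv1\pmod4$, then at least one of $r$ and $p-r$ is a primitive root modulo $p^2$. (2) If $p\equiv3\pmod4$, let $s\in\{1,\dots,p-1\}$ be the integer with $s\equiv -r^2\pmod p$. Then at least one of $r$ and $s$ is a primitive root modulo $p^2$.
   Context: An integer $r$ is a primitive root modulo $m$ if $\gcd(r,m)=1$ and the multiplicative order of $r$ modulo $m$ equals $\varphi(m)$, where $\varphi$ is Euler's totient function. *)

theory Defs
  imports "HOL-Number_Theory.Number_Theory"
begin

end

theory Submission
  imports Defs
begin

(* Let p be an odd prime, m = (p - 1)/2 and r a primitive root modulo p.

   Modulo p, -1 = r^m, so -r^j = r^(m+j) is again a primitive root exactly when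
   m + j is coprime to p - 1.  This gives: p - r is a primitive root modulo p when
   p = 1 (mod 4) (j = 1, m even), and s = -r^2 is one when p = 3 (mod 4) (j = 2, m odd).

   A primitive root g modulo p fails to be one modulo p^2 exactly when
   g^(p-1) = 1 (mod p^2).  By the binomial expansion
   (a + p t)^(p-1) = a^(p-1) + (p - 1) p t a^(p-2) (mod p^2), so if p does not divide a,
   then (a + p t)^(p-1) = a^(p-1) (mod p^2) forces p | t.  If both g and
   h = -g^j + p t failed to lift, then both h^(p-1) and (-g^j)^(p-1) would be
   1 (mod p^2), hence p | t.  For h = p - r (t = 1) this is absurd; for h = s it
   gives p^2 | s + r^2, impossible since 0 < s + r^2 < p^2. *)

lemma residue_primroot_power_iff:
  assumes "residue_primroot n g"
  shows "residue_primroot n (g ^ k) \<longleftrightarrow> coprime k (totient n)"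
proof -
  have n: "n > 0" and cop: "coprime n g" and ordg: "ord n g = totient n"
    using assms by (auto simp: residue_primroot_def)
  have prod: "ord n (g ^ k) * gcd k (totient n) = totient n"
    using ord_power_aux[of n g k] ordg by simp
  have "totient n > 0" using n by simp
  then have "ord n (g ^ k) = totient n \<longleftrightarrow> gcd k (totient n) = 1"
    using prod by auto
  also have "\<dots> \<longleftrightarrow> coprime k (totient n)"
    by (rule coprime_iff_gcd_eq_1[symmetric])
  finally show ?thesis
    using n cop by (simp add: residue_primroot_def)
qed

(* Modulo an odd prime, a primitive root raised to (p - 1)/2 is -1: its square
   is 1, and it is not 1 itself since the order of g is p - 1. *)
lemma residue_primroot_half_power:
  assumes p: "prime p" "odd p" and g: "residue_primroot p g"
  shows "[int g ^ ((p - 1) div 2) = - 1] (mod int p)"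
proof -
  define m where "m = (p - 1) div 2"
  have p1: "p > 1" using p prime_gt_1_nat by blast
  have pm: "p - 1 = 2 * m" and m0: "m > 0"
    using p p1 unfolding m_def by presburger+
  have cop: "coprime p g" and ordg: "ord p g = 2 * m"
    using g p pm by (auto simp: residue_primroot_def totient_prime)
  have "[g ^ (2 * m) = 1] (mod p)"
    using ord[of g p] ordg by simp
  then have "[g ^ m * g ^ m = 1] (mod p)"
    by (simp add: power_add[symmetric] mult_2)
  then have sq: "[int g ^ m * int g ^ m = 1] (mod int p)"
    using cong_int_iff[of "g ^ m * g ^ m" 1 p] by simp
  have "\<not> [g ^ m = 1] (mod p)"
  proof
    assume "[g ^ m = 1] (mod p)"
    then have "2 * m dvd m" using ordg by (simp only: ord_divides)
    then show False using m0 by (auto dest: dvd_imp_le)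
  qed
  then have ne1: "\<not> [int g ^ m = 1] (mod int p)"
    using cong_int_iff[of "g ^ m" 1 p] by simp
  have "g > 0" using cop p1 by (intro gr0I) auto
  then have "int g ^ m > 0" by simp
  moreover have "prime (int p)" using p by simp
  ultimately have "[int g ^ m = - 1] (mod int p)"
    using cong_square[OF _ _ sq] ne1 by blast
  then show ?thesis unfolding m_def .
qed

lemma coprime_add_double:
  fixes m j :: nat
  assumes "odd (m + j)" and "coprime m j"
  shows "coprime (m + j) (2 * m)"
proof -
  have "coprime (m + j) 2" using assms(1) by simp
  moreover have "coprime (m + j) m"
    using assms(2) by (metis coprime_commute coprime_iff_gcd_eq_1 gcd_add1 add.commute)
  ultimately show ?thesis by simp
qed

(* Since -1 = g^((p-1)/2), a residue x = -g^j is a primitive root modulo p iff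
   (p-1)/2 + j is coprime to p - 1. *)
lemma residue_primroot_minus_power_iff:
  assumes p: "prime p" "odd p" and g: "residue_primroot p g"
    and x: "[int x = - (int g ^ j)] (mod int p)"
  shows "residue_primroot p x \<longleftrightarrow> coprime ((p - 1) div 2 + j) (p - 1)"
proof -
  let ?m = "(p - 1) div 2"
  have "[- (int g ^ j) = int g ^ ?m * int g ^ j] (mod int p)"
    using cong_mult[OF cong_sym[OF residue_primroot_half_power[OF p g]] cong_refl[of "int g ^ j"]]
    by simp
  then have "[int x = int (g ^ (?m + j))] (mod int p)"
    using cong_trans[OF x] by (simp add: power_add)
  then have "[x = g ^ (?m + j)] (mod p)"
    using cong_int_iff by blast
  then have "residue_primroot p x \<longleftrightarrow> residue_primroot p (g ^ (?m + j))"
    by (rule residue_primroot_cong)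
  also have "\<dots> \<longleftrightarrow> coprime (?m + j) (p - 1)"
    using residue_primroot_power_iff[OF g] p by (simp add: totient_prime)
  finally show ?thesis .
qed

lemma power_add_multiple_expansion:
  fixes a q t :: "'a::comm_ring_1"
  shows "q^2 dvd (a + q*t)^Suc n - a^Suc n - of_nat (Suc n) * q * t * a^n"
proof (induction n)
  case 0
  then show ?case by simp
next
  case (Suc n)
  define E where "E = (a + q*t)^Suc n - a^Suc n - of_nat (Suc n) * q * t * a^n"
  have "(a + q*t)^Suc (Suc n) - a^Suc (Suc n) - of_nat (Suc (Suc n)) * q * t * a^Suc n
      = (a + q*t) * E + q^2 * (of_nat (Suc n) * t^2 * a^n)"
    unfolding E_def by (simp add: algebra_simps power2_eq_square)
  moreover have "q^2 dvd E" using Suc.IH unfolding E_def .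
  ultimately show ?case by simp
qed

lemma fermat_quotient_shift:
  fixes p :: nat and a t :: int
  assumes p: "prime p" and a: "\<not> int p dvd a"
    and cong: "[(a + int p * t) ^ (p - 1) = a ^ (p - 1)] (mod (int p)^2)"
  shows "int p dvd t"
proof -
  define n where "n = p - 2"
  have n: "p - 1 = Suc n"
    using prime_gt_1_nat[OF p] unfolding n_def by linarith
  define c where "c = int (Suc n) * int p * t * a ^ n"
  have "int p^2 dvd (a + int p * t)^Suc n - a^Suc n"
    using cong n by (simp add: cong_iff_dvd_diff)
  moreover have "int p^2 dvd (a + int p * t)^Suc n - a^Suc n - c"
    using power_add_multiple_expansion[of "int p" a t n] unfolding c_def by simp
  ultimately have "int p^2 dvd ((a + int p * t)^Suc n - a^Suc n)
                                - ((a + int p * t)^Suc n - a^Suc n - c)"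
    by (rule dvd_diff)
  then have "int p * int p dvd int p * (int (Suc n) * t * a^n)"
    unfolding c_def by (simp add: power2_eq_square mult_ac)
  then have "int p dvd int (Suc n) * t * a^n"
    using p by simp
  moreover have "prime (int p)" using p by simp
  moreover have "\<not> int p dvd int (Suc n)"
  proof
    assume "int p dvd int (Suc n)"
    then have "p dvd Suc n" by (simp only: of_nat_dvd_iff)
    then have "p \<le> Suc n" by (rule dvd_imp_le) simp
    then show False using n by linarith
  qed
  moreover have "\<not> int p dvd a^n"
    using a \<open>prime (int p)\<close> prime_dvd_power by blast
  ultimately show ?thesis
    using prime_dvd_mult_iff by blast
qed

lemma not_residue_primroot_square:
  assumes p: "prime p" "odd p" and g: "residue_primroot p g" "\<not> residue_primroot (p^2) g"
  shows "[int g ^ (p - 1) = 1] (mod (int p)^2)"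
proof -
  have "[g ^ (p - 1) = 1] (mod p^2)"
    using residue_primroot_prime_lift_iff[OF p g(1)] g(2) by (metis zero_less_numeral)
  then show ?thesis
    by (metis cong_int_iff of_nat_1 of_nat_power)
qed

lemma not_residue_primroot_square_shift:
  assumes p: "prime p" "odd p"
    and g: "residue_primroot p g" "\<not> residue_primroot (p^2) g"
    and h: "residue_primroot p h" "\<not> residue_primroot (p^2) h"
    and hg: "int h = - (int g ^ j) + int p * t"
  shows "int p dvd t"
proof (rule fermat_quotient_shift[OF p(1)])
  have "(- (int g ^ j)) ^ (p - 1) = (int g ^ (p - 1)) ^ j"
    using p by (simp add: power_minus_even power_mult[symmetric] mult.commute)
  also have "[\<dots> = 1] (mod (int p)^2)"
    using cong_pow[OF not_residue_primroot_square[OF p g]] by simp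
  also have "[1 = (- (int g ^ j) + int p * t) ^ (p - 1)] (mod (int p)^2)"
    using not_residue_primroot_square[OF p h] hg by (simp add: cong_sym)
  finally show "[(- (int g ^ j) + int p * t) ^ (p - 1) = (- (int g ^ j)) ^ (p - 1)] (mod (int p)^2)"
    by (rule cong_sym)
  have "coprime p g" using g(1) by (simp add: residue_primroot_def)
  then have "\<not> p dvd g"
    using p prime_gt_1_nat by (metis coprime_common_divisor_nat dvd_refl less_irrefl)
  then have "\<not> p dvd g ^ j"
    using p(1) prime_dvd_power by blast
  then show "\<not> int p dvd - (int g ^ j)"
    by (simp flip: of_nat_power)
qed

lemma residue_primroot_square_1_mod_4:
  assumes p: "prime p" "odd p" "[p = 1] (mod 4)" and r: "residue_primroot p r" "r < p"
  shows "residue_primroot (p^2) r \<or> residue_primroot (p^2) (p - r)"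
proof (rule ccontr)
  let ?m = "(p - 1) div 2"
  have "p - 1 = 2 * ?m" and "odd (?m + 1)"
    using p(2,3) by (auto simp: cong_def) presburger+
  then have "coprime (?m + 1) (p - 1)"
    using coprime_add_double[of ?m 1] by simp
  moreover have "[int (p - r) = - (int r ^ 1)] (mod int p)"
    using r(2) by (simp add: cong_iff_dvd_diff of_nat_diff)
  ultimately have neg: "residue_primroot p (p - r)"
    using residue_primroot_minus_power_iff[OF p(1,2) r(1)] by blast
  assume "\<not> ?thesis"
  then have "int p dvd 1"
    using not_residue_primroot_square_shift[OF p(1,2) r(1) _ neg, of 1 1] r(2)
    by (simp add: of_nat_diff)
  then show False using p(1) by simp
qed

(* Part (2): for p = 3 (mod 4), take h = s = -r^2 + p t; then p | t would give
   p^2 <= s + r^2 < p^2. *)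
lemma residue_primroot_square_3_mod_4:
  assumes p: "prime p" "odd p" "[p = 3] (mod 4)" and r: "residue_primroot p r" "r < p"
    and s: "s < p" "[int s = - (int r ^ 2)] (mod int p)"
  shows "residue_primroot (p^2) r \<or> residue_primroot (p^2) s"
proof (rule ccontr)
  let ?m = "(p - 1) div 2"
  have "p - 1 = 2 * ?m" and "odd (?m + 2)" and "odd ?m"
    using p(2,3) by (auto simp: cong_def) presburger+
  then have "coprime (?m + 2) (p - 1)"
    using coprime_add_double[of ?m 2] by simp
  then have sp: "residue_primroot p s"
    using residue_primroot_minus_power_iff[OF p(1,2) r(1) s(2)] by simp
  obtain t where t: "int s = - (int r ^ 2) + int p * t"
    using s(2) by (metis cong_iff_dvd_diff diff_minus_eq_add dvd_def add.commute eq_diff_eq)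
  assume "\<not> ?thesis"
  then have "int p dvd t"
    using not_residue_primroot_square_shift[OF p(1,2) r(1) _ sp _ t] by blast
  then have "int p * int p dvd int s + int r ^ 2"
    using t by simp
  moreover have "r > 0"
    using r(1) prime_gt_1_nat[OF p(1)] by (intro gr0I) auto
  then have "int s + int r ^ 2 > 0" by (simp add: add_nonneg_pos)
  ultimately have "int p * int p \<le> int s + int r ^ 2"
    by (rule zdvd_imp_le)
  moreover have "int r ^ 2 \<le> (int p - 1) ^ 2"
    using r(2) by (intro power_mono) auto
  ultimately show False
    using s(1) by (simp add: power2_eq_square algebra_simps)
qed

theorem mainTheorem12:
  fixes p r :: nat
  assumes "prime p" and "odd p"
    and "2 \<le> r" and "r \<le> p - 1"
    and "residue_primroot p r"
  shows "([p = 1] (mod 4) \<longrightarrow>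
           residue_primroot (p^2) r \<or> residue_primroot (p^2) (p - r))
       \<and> ([p = 3] (mod 4) \<longrightarrow>
           (\<forall>s::nat. 1 \<le> s \<and> s \<le> p - 1 \<and> [int s = - ((int r)^2)] (mod (int p)) \<longrightarrow>
              residue_primroot (p^2) r \<or> residue_primroot (p^2) s))"
proof (intro conjI impI allI)
  have r_less: "r < p" using assms(3,4) by linarith
  show "residue_primroot (p^2) r \<or> residue_primroot (p^2) (p - r)" if "[p = 1] (mod 4)"
    using residue_primroot_square_1_mod_4[OF assms(1,2) that assms(5) r_less] .
  fix s :: nat
  assume "[p = 3] (mod 4)"
    and s: "1 \<le> s \<and> s \<le> p - 1 \<and> [int s = - ((int r)^2)] (mod (int p))"
  moreover have "s < p" using s assms(3,4) by linarith
  ultimately show "residue_primroot (p^2) r \<or> residue_primroot (p^2) s"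
    using residue_primroot_square_3_mod_4[OF assms(1,2) _ assms(5) r_less] by blast
qed

end
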